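(* For all integers $k\ge1$ and $n\ge0$, \[ nov_k(n) = \frac{k}{2}\,\overline{M[k]}_2(n). \]
   Context: An overpartition of $n$ is a non-increasing sequence of positive integers summing to $n$ in which the first occurrence of each integer may be overlined. $nov_k(n)$ denotes the sum of all non-overlined parts divisible by $k$, summed over all overpartitions of $n$. With $(a_1,\dots,a_r;q)_\infty = \prod_{i\ge0}(1-a_1q^i)\cdots(1-a_rq^i)$, $\overline{P}(q) = \frac{(-q;q)_\infty}{(q;q)_\infty}$ and $C(z;q) = \frac{(q;q)_\infty}{(zq,q/z;q)_\infty}$, define $\overline{M[k]}(m,n)$ by $(q^k;q^k)_\infty\,\overline{P}(q)\,C(z;q^k) = \sum_{n\ge0}\sum_{m\in\mathbb{Z}}\overline{M[k]}(m,n)z^mq^n$, and $\overline{M[k]}_2(n) = \sum_{m\in\mathbb{Z}} m^2\,\overline{M[k]}(m,n)$. *)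

theory Defs
  imports "HOL-Analysis.Analysis" "HOL-Computational_Algebra.Formal_Laurent_Series"
begin

text \<open>An overpartition is a non-increasing list of positive parts, each part tagged with a
  flag (True = overlined); only the first occurrence of a given part value may be overlined.\<close>

definition is_overpartition :: "nat \<Rightarrow> (nat \<times> bool) list \<Rightarrow> bool" where
  "is_overpartition n xs \<longleftrightarrow>
     (\<forall>p\<in>set xs. 0 < fst p) \<and>
     sorted_wrt (\<lambda>a b. a \<ge> b) (map fst xs) \<and>
     sum_list (map fst xs) = n \<and>
     (\<forall>i<length xs. snd (xs ! i) \<longrightarrow> (\<forall>j<i. fst (xs ! j) \<noteq> fst (xs ! i)))"

definition nov :: "nat \<Rightarrow> nat \<Rightarrow> nat" where
  "nov k n = (\<Sum>xs\<in>{xs. is_overpartition n xs}.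
               \<Sum>p\<leftarrow>xs. if \<not> snd p \<and> k dvd fst p then fst p else 0)"

text \<open>Formal power series in q whose coefficients are formal Laurent series in z.\<close>

type_synonym ser = "real fls fps"

definition qv :: ser where "qv = fps_X"
definition zv :: ser where "zv = fps_const fls_X"
definition zinv :: ser where "zinv = fps_const fls_X_inv"

text \<open>(a;b)_\<infinity> = \<Prod>_{i\<ge>0} (1 - a b^i), as an infinite product in the fps topology.\<close>

definition qpoch :: "ser \<Rightarrow> ser \<Rightarrow> ser" where
  "qpoch a b = (\<Prod>i. 1 - a * b ^ i)"

definition Pbar :: ser where
  "Pbar = qpoch (- qv) qv / qpoch qv qv"

definition Cz :: "nat \<Rightarrow> ser" where
  "Cz k = qpoch (qv ^ k) (qv ^ k) /
          (qpoch (zv * qv ^ k) (qv ^ k) * qpoch (qv ^ k * zinv) (qv ^ k))"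

definition GF :: "nat \<Rightarrow> ser" where
  "GF k = qpoch (qv ^ k) (qv ^ k) * Pbar * Cz k"

definition Mbar :: "nat \<Rightarrow> int \<Rightarrow> nat \<Rightarrow> real" where
  "Mbar k m n = fls_nth (fps_nth (GF k) n) m"

definition Mbar2 :: "nat \<Rightarrow> nat \<Rightarrow> real" where
  "Mbar2 k n = (\<Sum>\<^sub>\<infinity>m\<in>(UNIV::int set). (of_int m)^2 * Mbar k m n)"

end

theory Submission
  imports Defs
begin

text \<open>
  Forgetting the order of the parts, an overpartition is a multiset of (part, overlined) pairs.
  Adding a non-overlined part \<open>s\<close> shows that the non-overlined parts equal to \<open>s\<close> are counted by
  \<open>P(q) q\<^sup>s/(1 - q\<^sup>s)\<close>, where \<open>P = Pbar\<close> counts overpartitions; hence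
  \<open>\<Sum>\<^sub>n nov\<^sub>k(n) q\<^sup>n = P(q) \<Sum>\<^sub>m k m q\<^sup>k\<^sup>m/(1 - q\<^sup>k\<^sup>m)\<close>.

  The moments \<open>\<Sum>\<^sub>j j\<^sup>r [z\<^sup>j] f\<close>, \<open>r = 0, 1, 2\<close>, of a Laurent polynomial \<open>f\<close> are the values at
  \<open>z = 1\<close> of \<open>(z d/dz)\<^sup>r f\<close> and obey the Leibniz rule. Applied coefficientwise in \<open>q\<close> to the
  generating function with all products truncated at degree \<open>n\<close>, they reduce the computation to
  the factors \<open>(1 - zy)(1 - y/z)\<close>, \<open>y = q\<^sup>k\<^sup>m\<close>, of \<open>C(z;q\<^sup>k)\<close>, whose moments are
  \<open>((1 - y)\<^sup>2, 0, -2y)\<close>. This gives \<open>\<Sum>\<^sub>n M\<^sub>2(n) q\<^sup>n = 2 P(q) \<Sum>\<^sub>m q\<^sup>k\<^sup>m/(1 - q\<^sup>k\<^sup>m)\<^sup>2\<close>.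
  Finally \<open>\<Sum>\<^sub>m m x\<^sup>m/(1 - x\<^sup>m) = \<Sum>\<^sub>m x\<^sup>m/(1 - x\<^sup>m)\<^sup>2\<close>, both sides being
  \<open>\<Sum>\<^sub>N \<sigma>(N) x\<^sup>N\<close>.
\<close>

unbundle fps_syntax

section \<open>Truncated products\<close>

definition fps_eq_upto :: "nat \<Rightarrow> 'a::zero fps \<Rightarrow> 'a fps \<Rightarrow> bool" where
  "fps_eq_upto n F G \<longleftrightarrow> (\<forall>j\<le>n. F $ j = G $ j)"

lemma fps_eq_upto_mult:
  fixes F G H K :: "'a::comm_ring_1 fps"
  assumes "fps_eq_upto n F G" "fps_eq_upto n H K"
  shows "fps_eq_upto n (F * H) (G * K)"
  using assms unfolding fps_eq_upto_def fps_mult_nth by (auto intro!: sum.cong)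

lemma fps_eq_upto_inverse:
  fixes F G :: "'a::field fps"
  assumes "fps_eq_upto n F G" "F $ 0 \<noteq> 0"
  shows "fps_eq_upto n (inverse F) (inverse G)"
proof -
  have "G $ 0 \<noteq> 0" using assms by (simp add: fps_eq_upto_def)
  have "fps_eq_upto n (inverse G * F * inverse F) (inverse G * G * inverse F)"
    using assms(1) by (intro fps_eq_upto_mult) (auto simp: fps_eq_upto_def)
  then have "fps_eq_upto n (inverse G) (inverse F)"
    using assms(2) \<open>G $ 0 \<noteq> 0\<close> by (simp add: inverse_mult_eq_1 inverse_mult_eq_1' mult.assoc)
  then show ?thesis by (simp add: fps_eq_upto_def)
qed

lemma fps_eq_upto_divide:
  fixes A A' B B' :: "'a::field fps"
  assumes "fps_eq_upto n A A'" "fps_eq_upto n B B'" "B $ 0 \<noteq> 0"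
  shows "fps_eq_upto n (A / B) (A' / B')"
proof -
  have "B' $ 0 \<noteq> 0" using assms by (simp add: fps_eq_upto_def)
  with assms show ?thesis
    by (simp add: fps_divide_unit fps_eq_upto_mult fps_eq_upto_inverse)
qed

lemma fps_prod_nth_0:
  fixes F :: "'b \<Rightarrow> 'a::comm_ring_1 fps"
  shows "(\<Prod>i\<in>I. F i) $ 0 = (\<Prod>i\<in>I. F i $ 0)"
  by (induction I rule: infinite_finite_induct) auto

lemma fps_mult_power_nth_eq_0:
  fixes a b :: "'a::comm_ring_1 fps"
  assumes "a $ 0 = 0" "b $ 0 = 0" "t \<le> i"
  shows "(a * b ^ i) $ t = 0"
  using assms(3)
proof (induction i arbitrary: t)
  case (Suc i)
  have "(a * b ^ Suc i) $ t = ((a * b ^ i) * b) $ t"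
    by (simp add: mult_ac)
  also have "\<dots> = (\<Sum>s=0..t. (a * b ^ i) $ s * b $ (t - s))"
    by (rule fps_mult_nth)
  also have "\<dots> = 0"
    using Suc assms(2) by (intro sum.neutral) (auto simp: le_Suc_eq)
  finally show ?case .
qed (use assms(1) in simp)

lemma fps_mult_nth_eq_if_coeffs_vanish:
  fixes P F :: "'a::comm_ring_1 fps"
  assumes "F $ 0 = 1" "\<And>t. 0 < t \<Longrightarrow> t \<le> n \<Longrightarrow> F $ t = 0" "j \<le> n"
  shows "(P * F) $ j = P $ j"
proof -
  have "(P * F) $ j = (\<Sum>i=0..j. if i = j then P $ j else 0)"
    unfolding fps_mult_nth using assms by (intro sum.cong) auto
  then show ?thesis by simp
qed

definition qpoch_trunc :: "'a::comm_ring_1 fps \<Rightarrow> 'a fps \<Rightarrow> nat \<Rightarrow> 'a fps" where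
  "qpoch_trunc a b n = (\<Prod>i\<le>n. 1 - a * b ^ i)"

lemma qpoch_trunc_nth_0:
  fixes a b :: "'a::comm_ring_1 fps"
  assumes "a $ 0 = 0" "b $ 0 = 0"
  shows "qpoch_trunc a b n $ 0 = 1"
  using assms by (simp add: qpoch_trunc_def fps_prod_nth_0)

text \<open>Factor \<open>i\<close> of the product only changes coefficients of degree \<open>> i\<close>, so the partial
  products stabilise coefficientwise.\<close>

lemma qpoch_eq_upto_trunc:
  fixes a b :: ser
  assumes a: "a $ 0 = 0" and b: "b $ 0 = 0"
  shows "fps_eq_upto n (qpoch a b) (qpoch_trunc a b n)"
proof -
  define f where "f = (\<lambda>i. 1 - a * b ^ i)"
  define P where "P = (\<lambda>n. \<Prod>i\<le>n. f i)"
  have f0: "f i $ 0 = 1" for i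
    unfolding f_def using fps_mult_power_nth_eq_0[OF a b, of 0 i] by simp
  have ft: "f i $ t = 0" if "0 < t" "t \<le> i" for t i
    unfolding f_def using fps_mult_power_nth_eq_0[OF a b that(2)] that(1) by simp
  have stable: "P m $ j = P j $ j" if "j \<le> m" for j m
    using that
  proof (induction m)
    case (Suc m)
    show ?case
    proof (cases "j = Suc m")
      case False
      have "P (Suc m) $ j = (P m * f (Suc m)) $ j"
        by (simp add: P_def prod.atMost_Suc)
      also have "\<dots> = P m $ j"
        by (rule fps_mult_nth_eq_if_coeffs_vanish[OF f0 ft]) (use Suc.prems False in auto)
      finally show ?thesis using False Suc by simp
    qed simp
  qed simp
  define g where "g = Abs_fps (\<lambda>j. P j $ j)"
  have "g $ 0 = 1"
    by (simp add: g_def P_def f0)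
  then have "g \<noteq> 0" by auto
  moreover have "(\<lambda>n. \<Prod>i\<le>n. f (i + 0)) \<longlonglongrightarrow> g"
  proof (rule tendsto_fpsI)
    fix j
    have "(\<Prod>i\<le>m. f (i + 0)) $ j = g $ j" if "j \<le> m" for m
      using stable[OF that] by (simp add: P_def g_def)
    then show "\<forall>\<^sub>F m in sequentially. (\<Prod>i\<le>m. f (i + 0)) $ j = g $ j"
      unfolding eventually_at_top_linorder by blast
  qed
  ultimately have "f has_prod g"
    by (simp add: has_prod_def raw_has_prod_def)
  then have "qpoch a b = g"
    unfolding qpoch_def f_def by (rule has_prod_unique[symmetric])
  show ?thesis
    unfolding fps_eq_upto_def
  proof (intro allI impI)
    fix j assume "j \<le> n"
    have "qpoch a b $ j = P j $ j" using \<open>qpoch a b = g\<close> by (simp add: g_def)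
    also have "\<dots> = P n $ j" using stable[OF \<open>j \<le> n\<close>] by simp
    finally show "qpoch a b $ j = qpoch_trunc a b n $ j" by (simp add: P_def f_def qpoch_trunc_def)
  qed
qed

section \<open>Overpartitions as multisets\<close>

definition overlines_first_only :: "(nat \<times> bool) list \<Rightarrow> bool" where
  "overlines_first_only xs \<longleftrightarrow>
     (\<forall>i<length xs. snd (xs ! i) \<longrightarrow> (\<forall>j<i. fst (xs ! j) \<noteq> fst (xs ! i)))"

lemma overlines_first_only_Cons:
  "overlines_first_only (p # ys) \<longleftrightarrow>
     overlines_first_only ys \<and> (\<forall>q\<in>set ys. snd q \<longrightarrow> fst q \<noteq> fst p)"
  unfolding overlines_first_only_def length_Cons All_less_Suc2 nth_Cons_Suc nth_Cons_0
  by (fastforce simp: in_set_conv_nth)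

fun overpartition_list :: "(nat \<times> bool) list \<Rightarrow> bool" where
  "overpartition_list [] \<longleftrightarrow> True"
| "overpartition_list (p # ys) \<longleftrightarrow>
     0 < fst p \<and> (\<forall>q\<in>set ys. fst q \<le> fst p \<and> (snd q \<longrightarrow> fst q \<noteq> fst p)) \<and>
     overpartition_list ys"

lemma is_overpartition_iff:
  "is_overpartition n xs \<longleftrightarrow> overpartition_list xs \<and> sum_list (map fst xs) = n"
proof -
  have "overpartition_list xs \<longleftrightarrow>
      (\<forall>p\<in>set xs. 0 < fst p) \<and> sorted_wrt (\<ge>) (map fst xs) \<and> overlines_first_only xs"
    by (induction xs) (auto simp: overlines_first_only_Cons overlines_first_only_def[of "[]"])
  then show ?thesis
    unfolding is_overpartition_def overlines_first_only_def by blast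
qed

definition overpartitions :: "nat \<Rightarrow> (nat \<times> bool) multiset set" where
  "overpartitions n =
     {M. (\<forall>p\<in>#M. 0 < fst p) \<and> (\<forall>s. count M (s, True) \<le> 1) \<and> (\<Sum>p\<in>#M. fst p) = n}"

lemma overpartition_list_mset:
  "overpartition_list xs \<Longrightarrow>
     (\<forall>p\<in>#mset xs. 0 < fst p) \<and> (\<forall>s. count (mset xs) (s, True) \<le> 1)"
proof (induction xs)
  case (Cons p ys)
  have "count (mset (p # ys)) (s, True) \<le> 1" for s
  proof (cases "p = (s, True)")
    case True
    then have "(s, True) \<notin> set ys" using Cons.prems by force
    with True show ?thesis by (simp add: count_eq_zero_iff)
  qed (use Cons in simp)
  with Cons show ?case by auto
qed simp

lemma overpartition_list_mset_inj:
  "overpartition_list xs \<Longrightarrow> overpartition_list ys \<Longrightarrow> mset xs = mset ys \<Longrightarrow> xs = ys"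
proof (induction xs arbitrary: ys)
  case (Cons p xs')
  then obtain q ys' where ys: "ys = q # ys'" by (cases ys) auto
  have sets: "set (p # xs') = set (q # ys')" using Cons.prems(3) ys by (metis set_mset_mset)
  then have "q \<in> set (p # xs')" "p \<in> set (q # ys')" by auto
  then have "fst q \<le> fst p" "fst p \<le> fst q" using Cons.prems(1,2) ys by auto
  then have "fst p = fst q" by simp
  moreover have "snd p \<longrightarrow> p \<notin> set ys'" "snd q \<longrightarrow> q \<notin> set xs'"
    using Cons.prems(1,2) ys \<open>fst p = fst q\<close> by auto
  ultimately have "p = q" using sets by (auto simp: prod_eq_iff)
  with Cons ys show ?case by simp
qed simp

lemma overpartition_list_exists:
  "(\<forall>p\<in>#M. 0 < fst p) \<Longrightarrow> (\<forall>s. count M (s, True) \<le> 1) \<Longrightarrow>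
     \<exists>xs. overpartition_list xs \<and> mset xs = M"
proof (induction "size M" arbitrary: M rule: less_induct)
  case less
  show ?case
  proof (cases "M = {#}")
    case False
    \<comment> \<open>Put first a largest part, overlined if possible.\<close>
    define s where "s = Max (fst ` set_mset M)"
    have s_max: "fst q \<le> s" if "q \<in># M" for q
      using that unfolding s_def by simp
    define p where "p = (s, (s, True) \<in># M)"
    have "s \<in> fst ` set_mset M" unfolding s_def using False by (intro Max_in) auto
    have "p \<in># M"
    proof (cases "(s, True) \<in># M")
      case False
      obtain b where "(s, b) \<in># M" using \<open>s \<in> fst ` set_mset M\<close> by force
      with False show ?thesis by (cases b) (simp_all add: p_def)
    qed (simp add: p_def)
    then obtain M' where M: "M = add_mset p M'" by (metis insert_DiffM)
    have "size M' < size M" using M by simp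
    moreover have "\<forall>p\<in>#M'. 0 < fst p" using less.prems(1) M by simp
    moreover have "\<forall>s'. count M' (s', True) \<le> 1"
    proof
      fix s' show "count M' (s', True) \<le> 1"
        using less.prems(2)[rule_format, of s'] M by (simp split: if_splits)
    qed
    ultimately obtain xs' where xs': "overpartition_list xs'" "mset xs' = M'"
      using less.hyps by blast
    have "fst q \<le> fst p \<and> (snd q \<longrightarrow> fst q \<noteq> fst p)" if "q \<in> set xs'" for q
    proof
      have q: "q \<in># M'" using that by (simp flip: xs'(2))
      then have "q \<in># M" using M by simp
      then show "fst q \<le> fst p" using s_max by (simp add: p_def)
      show "snd q \<longrightarrow> fst q \<noteq> fst p"
      proof (intro impI notI)
        assume "snd q" "fst q = fst p"
        then have q_eq: "q = (s, True)" by (simp add: p_def prod_eq_iff)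
        with \<open>q \<in># M\<close> have "p = (s, True)" by (simp add: p_def)
        with q q_eq M have "count M (s, True) \<ge> 2" by simp
        with less.prems(2)[rule_format, of s] show False by simp
      qed
    qed
    moreover have "0 < fst p" using less.prems(1) \<open>p \<in># M\<close> by blast
    ultimately show ?thesis using xs' M by (intro exI[of _ "p # xs'"]) simp
  qed simp
qed

lemma bij_betw_mset_overpartitions:
  "bij_betw mset {xs. is_overpartition n xs} (overpartitions n)"
proof -
  have sum_eq: "(\<Sum>p\<in>#mset xs. fst p) = sum_list (map fst xs)" for xs :: "(nat \<times> bool) list"
    by (metis mset_map sum_mset_sum_list)
  have "inj_on mset {xs. is_overpartition n xs}"
    by (intro inj_onI) (auto simp: is_overpartition_iff intro: overpartition_list_mset_inj)
  moreover have "mset ` {xs. is_overpartition n xs} = overpartitions n"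
  proof (intro set_eqI iffI)
    fix M assume "M \<in> mset ` {xs. is_overpartition n xs}"
    then obtain xs where "overpartition_list xs" "sum_list (map fst xs) = n" "M = mset xs"
      by (auto simp: is_overpartition_iff)
    then show "M \<in> overpartitions n"
      using overpartition_list_mset by (simp add: overpartitions_def sum_eq)
  next
    fix M assume M: "M \<in> overpartitions n"
    then obtain xs where "overpartition_list xs" "mset xs = M"
      using overpartition_list_exists unfolding overpartitions_def by blast
    with M show "M \<in> mset ` {xs. is_overpartition n xs}"
      by (auto simp: is_overpartition_iff overpartitions_def simp flip: sum_eq)
  qed
  ultimately show ?thesis unfolding bij_betw_def by blast
qed

lemma finite_overpartition_lists: "finite {xs. is_overpartition n xs}"
proof -
  have "xs \<in> {xs. set xs \<subseteq> {..n} \<times> UNIV \<and> length xs \<le> n}" if "is_overpartition n xs" for xs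
  proof -
    have pos: "\<forall>p\<in>set xs. 0 < fst p" and sum: "sum_list (map fst xs) = n"
      using that by (auto simp: is_overpartition_def)
    have "fst p \<le> n" if "p \<in> set xs" for p
      using member_le_sum_list[of "fst p" "map fst xs"] that sum by auto
    moreover have "length xs \<le> sum_list (map fst xs)"
      using pos by (induction xs) auto
    ultimately show ?thesis using sum by force
  qed
  moreover have "finite {xs. set xs \<subseteq> {..n} \<times> (UNIV :: bool set) \<and> length xs \<le> n}"
    by (intro finite_lists_length_le) auto
  ultimately show ?thesis by (metis (no_types, lifting) finite_subset mem_Collect_eq subsetI)
qed

lemma finite_overpartitions: "finite (overpartitions n)"
  using bij_betw_mset_overpartitions finite_overpartition_lists bij_betw_finite by blast

section \<open>Counting overpartitions\<close>

definition bounded_overpartitions :: "nat \<Rightarrow> nat \<Rightarrow> (nat \<times> bool) multiset set" where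
  "bounded_overpartitions L n = {M \<in> overpartitions n. \<forall>p\<in>#M. fst p \<le> L}"

lemma add_mset_in_overpartitions:
  "add_mset (s, b) M \<in> overpartitions n \<longleftrightarrow>
     0 < s \<and> s \<le> n \<and> M \<in> overpartitions (n - s) \<and> (b \<longrightarrow> (s, True) \<notin># M)"
proof
  assume h: "add_mset (s, b) M \<in> overpartitions n"
  then have "0 < s" "\<forall>p\<in>#M. 0 < fst p" "s + (\<Sum>p\<in>#M. fst p) = n"
    by (auto simp: overpartitions_def)
  moreover have count: "count (add_mset (s, b) M) (s', True) \<le> 1" for s'
    using h by (auto simp: overpartitions_def)
  have "count M (s', True) \<le> 1" for s'
    using count[of s'] by (simp split: if_splits)
  moreover have "b \<longrightarrow> (s, True) \<notin># M"
    using count[of s] by (simp add: not_in_iff split: if_splits)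
  ultimately show "0 < s \<and> s \<le> n \<and> M \<in> overpartitions (n - s) \<and> (b \<longrightarrow> (s, True) \<notin># M)"
    by (auto simp: overpartitions_def)
next
  assume h: "0 < s \<and> s \<le> n \<and> M \<in> overpartitions (n - s) \<and> (b \<longrightarrow> (s, True) \<notin># M)"
  then have "count (add_mset (s, b) M) (s', True) \<le> 1" for s'
    by (auto simp: overpartitions_def count_eq_zero_iff)
  with h show "add_mset (s, b) M \<in> overpartitions n"
    by (auto simp: overpartitions_def)
qed

lemma add_mset_in_bounded_overpartitions:
  "add_mset (s, b) M \<in> bounded_overpartitions L n \<longleftrightarrow>
     0 < s \<and> s \<le> L \<and> s \<le> n \<and> M \<in> bounded_overpartitions L (n - s) \<and> (b \<longrightarrow> (s, True) \<notin># M)"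
  unfolding bounded_overpartitions_def using add_mset_in_overpartitions by auto

lemma part_le_if_in_overpartitions: "M \<in> overpartitions n \<Longrightarrow> p \<in># M \<Longrightarrow> fst p \<le> n"
proof -
  assume "M \<in> overpartitions n" "p \<in># M"
  moreover from \<open>p \<in># M\<close> obtain M' where "M = add_mset p M'" by (metis insert_DiffM)
  ultimately show ?thesis by (auto simp: overpartitions_def)
qed

lemma bounded_overpartitions_eq: "n \<le> L \<Longrightarrow> bounded_overpartitions L n = overpartitions n"
  unfolding bounded_overpartitions_def using part_le_if_in_overpartitions by fastforce

lemma finite_bounded_overpartitions: "finite (bounded_overpartitions L n)"
  unfolding bounded_overpartitions_def using finite_overpartitions by simp

lemma bij_betw_remove_nonoverlined:
  assumes "0 < s" "s \<le> L" "s \<le> n"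
  shows "bij_betw (\<lambda>M. M - {#(s, False)#})
           {M \<in> bounded_overpartitions L n. (s, False) \<in># M} (bounded_overpartitions L (n - s))"
proof (rule bij_betw_byWitness[where f' = "add_mset (s, False)"])
  show "(\<lambda>M. M - {#(s, False)#}) ` {M \<in> bounded_overpartitions L n. (s, False) \<in># M}
        \<subseteq> bounded_overpartitions L (n - s)"
  proof clarify
    fix M assume "M \<in> bounded_overpartitions L n" "(s, False) \<in># M"
    then have "add_mset (s, False) (M - {#(s, False)#}) \<in> bounded_overpartitions L n"
      by (simp add: insert_DiffM)
    then show "M - {#(s, False)#} \<in> bounded_overpartitions L (n - s)"
      by (simp only: add_mset_in_bounded_overpartitions)
  qed
  show "add_mset (s, False) ` bounded_overpartitions L (n - s)
        \<subseteq> {M \<in> bounded_overpartitions L n. (s, False) \<in># M}"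
    using assms add_mset_in_bounded_overpartitions by auto
qed (auto simp: insert_DiffM)

lemma bij_betw_remove_overlined:
  assumes "0 < s" "s \<le> L" "s \<le> n"
  shows "bij_betw (\<lambda>M. M - {#(s, True)#})
           {M \<in> bounded_overpartitions L n. (s, False) \<notin># M \<and> (s, True) \<in># M}
           {M \<in> bounded_overpartitions L (n - s). (s, False) \<notin># M \<and> (s, True) \<notin># M}"
proof (rule bij_betw_byWitness[where f' = "add_mset (s, True)"])
  show "(\<lambda>M. M - {#(s, True)#}) ` {M \<in> bounded_overpartitions L n. (s, False) \<notin># M \<and> (s, True) \<in># M}
        \<subseteq> {M \<in> bounded_overpartitions L (n - s). (s, False) \<notin># M \<and> (s, True) \<notin># M}"
  proof (rule image_subsetI)
    fix M assume "M \<in> {M \<in> bounded_overpartitions L n. (s, False) \<notin># M \<and> (s, True) \<in># M}"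
    then have M: "M \<in> bounded_overpartitions L n" "(s, False) \<notin># M" "(s, True) \<in># M"
      by simp_all
    then have "add_mset (s, True) (M - {#(s, True)#}) \<in> bounded_overpartitions L n"
      by (simp add: insert_DiffM)
    then have "M - {#(s, True)#} \<in> bounded_overpartitions L (n - s)"
      "(s, True) \<notin># M - {#(s, True)#}"
      by (simp_all only: add_mset_in_bounded_overpartitions simp_thms)
    moreover have "(s, False) \<notin># M - {#(s, True)#}"
      using M(2) by (meson in_diffD)
    ultimately show "M - {#(s, True)#} \<in>
        {M \<in> bounded_overpartitions L (n - s). (s, False) \<notin># M \<and> (s, True) \<notin># M}"
      by simp
  qed
  show "add_mset (s, True) ` {M \<in> bounded_overpartitions L (n - s). (s, False) \<notin># M \<and> (s, True) \<notin># M}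
        \<subseteq> {M \<in> bounded_overpartitions L n. (s, False) \<notin># M \<and> (s, True) \<in># M}"
    using assms add_mset_in_bounded_overpartitions by auto
qed (auto simp: insert_DiffM)

lemma bounded_overpartitions_Suc_avoiding:
  "{M \<in> bounded_overpartitions (Suc L) n. (Suc L, False) \<notin># M \<and> (Suc L, True) \<notin># M} =
     bounded_overpartitions L n"
proof -
  have "fst p \<le> L"
    if "\<forall>p\<in>#M. fst p \<le> Suc L" "(Suc L, False) \<notin># M" "(Suc L, True) \<notin># M" "p \<in># M"
    for M p
  proof (rule ccontr)
    assume "\<not> fst p \<le> L"
    moreover have "fst p \<le> Suc L" using that(1,4) by blast
    ultimately have "p = (Suc L, snd p)" by (simp add: prod_eq_iff)
    then show False using that by (cases "snd p") auto
  qed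
  then show ?thesis unfolding bounded_overpartitions_def by (auto simp: le_Suc_eq)
qed

lemma card_bounded_overpartitions_with_nonoverlined:
  assumes "0 < s" "s \<le> L"
  shows "card {M \<in> bounded_overpartitions L n. (s, False) \<in># M} =
    (if s \<le> n then card (bounded_overpartitions L (n - s)) else 0)"
proof (cases "s \<le> n")
  case True
  then show ?thesis using bij_betw_same_card[OF bij_betw_remove_nonoverlined[OF assms True]] by simp
next
  case False
  then have empty: "{M \<in> bounded_overpartitions L n. (s, False) \<in># M} = {}"
    unfolding bounded_overpartitions_def using part_le_if_in_overpartitions by fastforce
  show ?thesis using False by (simp only: empty card.empty) simp
qed

lemma card_bounded_overpartitions_with_overlined:
  assumes "0 < s" "s \<le> L"
  shows "card {M \<in> bounded_overpartitions L n. (s, False) \<notin># M \<and> (s, True) \<in># M} =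
    (if s \<le> n
     then card {M \<in> bounded_overpartitions L (n - s). (s, False) \<notin># M \<and> (s, True) \<notin># M}
     else 0)"
proof (cases "s \<le> n")
  case True
  then show ?thesis using bij_betw_same_card[OF bij_betw_remove_overlined[OF assms True]] by simp
next
  case False
  then have empty: "{M \<in> bounded_overpartitions L n. (s, False) \<notin># M \<and> (s, True) \<in># M} = {}"
    unfolding bounded_overpartitions_def using part_le_if_in_overpartitions by fastforce
  show ?thesis using False by (simp only: empty card.empty) simp
qed

text \<open>Split according to whether the largest allowed part \<open>Suc L\<close> occurs non-overlined, only
  overlined, or not at all.\<close>

lemma card_bounded_overpartitions_Suc:
  "card (bounded_overpartitions (Suc L) n) = card (bounded_overpartitions L n) +
     (if Suc L \<le> n
      then card (bounded_overpartitions (Suc L) (n - Suc L)) + card (bounded_overpartitions L (n - Suc L))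
      else 0)"
proof -
  define S where "S = Suc L"
  define A1 where "A1 = {M \<in> bounded_overpartitions S n. (S, False) \<in># M}"
  define A2 where "A2 = {M \<in> bounded_overpartitions S n. (S, False) \<notin># M \<and> (S, True) \<in># M}"
  define A3 where "A3 = {M \<in> bounded_overpartitions S n. (S, False) \<notin># M \<and> (S, True) \<notin># M}"
  have "bounded_overpartitions S n = A1 \<union> A2 \<union> A3"
    unfolding A1_def A2_def A3_def by blast
  moreover have "finite A1" "finite A2" "finite A3"
    unfolding A1_def A2_def A3_def using finite_bounded_overpartitions by auto
  moreover have "A1 \<inter> A2 = {}" "(A1 \<union> A2) \<inter> A3 = {}"
    unfolding A1_def A2_def A3_def by blast+
  ultimately have "card (bounded_overpartitions S n) = card A1 + card A2 + card A3"
    by (simp add: card_Un_disjoint)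
  moreover have "card A1 = (if S \<le> n then card (bounded_overpartitions S (n - S)) else 0)"
    unfolding A1_def S_def by (rule card_bounded_overpartitions_with_nonoverlined) simp_all
  moreover have "card A2 = (if S \<le> n then card (bounded_overpartitions L (n - S)) else 0)"
    unfolding A2_def S_def card_bounded_overpartitions_with_overlined[OF zero_less_Suc order.refl]
    by (simp add: bounded_overpartitions_Suc_avoiding)
  moreover have "A3 = bounded_overpartitions L n"
    unfolding A3_def S_def by (rule bounded_overpartitions_Suc_avoiding)
  ultimately show ?thesis unfolding S_def by simp
qed

definition bounded_overpartition_fps :: "nat \<Rightarrow> real fps" where
  "bounded_overpartition_fps L = Abs_fps (\<lambda>n. real (card (bounded_overpartitions L n)))"

definition overpartition_fps :: "real fps" where
  "overpartition_fps = Abs_fps (\<lambda>n. real (card (overpartitions n)))"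

lemma bounded_overpartition_fps_nth:
  "n \<le> L \<Longrightarrow> bounded_overpartition_fps L $ n = overpartition_fps $ n"
  by (simp add: bounded_overpartition_fps_def overpartition_fps_def bounded_overpartitions_eq)

lemma bounded_overpartition_fps_0: "bounded_overpartition_fps 0 = 1"
proof -
  have "bounded_overpartitions 0 n = (if n = 0 then {{#}} else {})" for n
  proof -
    have "M = {#}" if "M \<in> bounded_overpartitions 0 n" for M
    proof (rule ccontr)
      assume "M \<noteq> {#}"
      then obtain p where "p \<in># M" by (meson multiset_nonemptyE)
      with that show False
        unfolding bounded_overpartitions_def overpartitions_def by fastforce
    qed
    moreover have "{#} \<in> bounded_overpartitions 0 n \<longleftrightarrow> n = 0"
      by (simp add: bounded_overpartitions_def overpartitions_def)
    ultimately show ?thesis by auto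
  qed
  then show ?thesis by (intro fps_ext) (simp add: bounded_overpartition_fps_def)
qed

lemma bounded_overpartition_fps_Suc:
  "bounded_overpartition_fps (Suc L) * (1 - fps_X ^ Suc L) =
     bounded_overpartition_fps L * (1 + fps_X ^ Suc L)"
  by (rule fps_ext)
     (simp add: ring_distribs fps_X_power_mult_right_nth bounded_overpartition_fps_def
        card_bounded_overpartitions_Suc not_less del: power_Suc)

lemma bounded_overpartition_fps_qpoch_trunc:
  "bounded_overpartition_fps (Suc n) * qpoch_trunc fps_X fps_X n = qpoch_trunc (- fps_X) fps_X n"
proof (induction n)
  case 0
  then show ?case
    using bounded_overpartition_fps_Suc[of 0] by (simp add: bounded_overpartition_fps_0 qpoch_trunc_def)
next
  case (Suc n)
  have "bounded_overpartition_fps (Suc (Suc n)) * qpoch_trunc fps_X fps_X (Suc n)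
      = (bounded_overpartition_fps (Suc (Suc n)) * (1 - fps_X ^ Suc (Suc n))) * qpoch_trunc fps_X fps_X n"
    by (simp add: qpoch_trunc_def prod.atMost_Suc mult_ac)
  also have "\<dots> = (1 + fps_X ^ Suc (Suc n)) * (bounded_overpartition_fps (Suc n) * qpoch_trunc fps_X fps_X n)"
    by (subst bounded_overpartition_fps_Suc) (simp only: mult_ac)
  also have "\<dots> = qpoch_trunc (- fps_X) fps_X (Suc n)"
    using Suc by (simp add: qpoch_trunc_def prod.atMost_Suc mult_ac)
  finally show ?case .
qed

section \<open>Non-overlined parts\<close>

definition nonoverlined_count :: "nat \<Rightarrow> nat \<Rightarrow> nat" where
  "nonoverlined_count s n = (\<Sum>M\<in>overpartitions n. count M (s, False))"

lemma nonoverlined_count_eq_0: "n < s \<Longrightarrow> nonoverlined_count s n = 0"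
  unfolding nonoverlined_count_def
  by (rule sum.neutral) (use part_le_if_in_overpartitions in \<open>force simp: count_eq_zero_iff\<close>)

text \<open>Adding a non-overlined part \<open>s\<close> maps the overpartitions of \<open>n - s\<close> bijectively onto those of
  \<open>n\<close> containing it, raising its multiplicity by one.\<close>

lemma nonoverlined_count_rec:
  assumes "0 < s" "s \<le> n"
  shows "nonoverlined_count s n = nonoverlined_count s (n - s) + card (overpartitions (n - s))"
proof -
  define A where "A = {M \<in> bounded_overpartitions n n. (s, False) \<in># M}"
  have "nonoverlined_count s n = (\<Sum>M\<in>bounded_overpartitions n n. count M (s, False))"
    by (simp add: nonoverlined_count_def bounded_overpartitions_eq)
  also have "\<dots> = (\<Sum>M\<in>A. count M (s, False))"
    unfolding A_def
    by (rule sum.mono_neutral_right) (auto simp: finite_bounded_overpartitions count_eq_zero_iff)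
  also have "\<dots> = (\<Sum>M\<in>A. count (M - {#(s, False)#}) (s, False) + 1)"
    by (rule sum.cong) (auto simp: A_def)
  also have "\<dots> = (\<Sum>M\<in>bounded_overpartitions n (n - s). count M (s, False) + 1)"
    unfolding A_def
    by (rule sum.reindex_bij_betw[OF bij_betw_remove_nonoverlined[OF assms(1) assms(2) assms(2)],
          where g = "\<lambda>M. count M (s, False) + 1"])
  also have "\<dots> = nonoverlined_count s (n - s) + card (overpartitions (n - s))"
    by (simp add: nonoverlined_count_def sum_Suc bounded_overpartitions_eq)
  finally show ?thesis .
qed

definition multiples_fps :: "nat \<Rightarrow> 'a::comm_ring_1 fps" where
  "multiples_fps s = Abs_fps (\<lambda>t. if 0 < t \<and> s dvd t then 1 else 0)"

lemma multiples_fps_times: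
  assumes "0 < s"
  shows "multiples_fps s * (1 - fps_X ^ s) = (fps_X ^ s :: 'a::comm_ring_1 fps)"
proof (rule fps_ext)
  fix t
  show "(multiples_fps s * (1 - fps_X ^ s)) $ t = (fps_X ^ s :: 'a fps) $ t"
  proof (cases "t < s")
    case True
    then have "\<not> (0 < t \<and> s dvd t)" by (auto dest: dvd_imp_le)
    with True show ?thesis by (simp add: ring_distribs fps_X_power_mult_right_nth multiples_fps_def)
  next
    case False
    with assms show ?thesis
      by (cases "t = s")
         (auto simp: ring_distribs fps_X_power_mult_right_nth multiples_fps_def dvd_minus_self)
  qed
qed

lemma one_minus_fps_X_power_neq_0:
  assumes "0 < s"
  shows "(1 - fps_X ^ s :: 'a::comm_ring_1 fps) \<noteq> 0"
proof -
  have "(1 - fps_X ^ s :: 'a fps) $ 0 = 1" using assms by simp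
  then show ?thesis by (metis fps_zero_nth zero_neq_one)
qed

lemma nonoverlined_count_fps:
  assumes "0 < s"
  shows "real (nonoverlined_count s n) = (overpartition_fps * multiples_fps s) $ n"
proof -
  define C where "C = Abs_fps (\<lambda>n. real (nonoverlined_count s n))"
  have "C * (1 - fps_X ^ s) = fps_X ^ s * overpartition_fps"
  proof (rule fps_ext)
    fix n
    show "(C * (1 - fps_X ^ s)) $ n = (fps_X ^ s * overpartition_fps) $ n"
      using nonoverlined_count_eq_0[of n s] nonoverlined_count_rec[OF assms, of n]
      by (cases "n < s")
         (simp_all add: ring_distribs fps_X_power_mult_right_nth fps_X_power_mult_nth C_def
            overpartition_fps_def)
  qed
  also have "\<dots> = overpartition_fps * multiples_fps s * (1 - fps_X ^ s)"
    by (simp add: multiples_fps_times[OF assms] mult.assoc mult.commute)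
  finally have "C = overpartition_fps * multiples_fps s"
    using one_minus_fps_X_power_neq_0[OF assms] by (metis mult_right_cancel)
  then show ?thesis by (simp add: fps_eq_iff C_def)
qed

lemma sum_mset_nonoverlined:
  fixes f :: "nat \<Rightarrow> nat"
  assumes "fst ` set_mset M \<subseteq> A" "finite A"
  shows "(\<Sum>p\<in>#M. if snd p then 0 else f (fst p)) = (\<Sum>s\<in>A. f s * count M (s, False))"
  using assms(1)
proof (induction M)
  case (add x M)
  have "(\<Sum>s\<in>A. f s * count (add_mset x M) (s, False)) =
        (\<Sum>s\<in>A. f s * count M (s, False)) + (\<Sum>s\<in>A. if s = fst x \<and> \<not> snd x then f s else 0)"
    by (subst sum.distrib[symmetric]) (auto intro!: sum.cong simp: prod_eq_iff)
  also have "(\<Sum>s\<in>A. if s = fst x \<and> \<not> snd x then f s else 0) = (if snd x then 0 else f (fst x))"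
    using add.prems assms(2) by (simp add: sum.delta')
  finally show ?case using add by simp
qed simp

lemma nov_eq_sum_nonoverlined_count:
  "nov k n = (\<Sum>s\<in>{1..n}. (if k dvd s then s else 0) * nonoverlined_count s n)"
proof -
  define w where "w = (\<lambda>p::nat \<times> bool. if \<not> snd p \<and> k dvd fst p then fst p else 0)"
  have w_eq: "w = (\<lambda>p. if snd p then 0 else if k dvd fst p then fst p else 0)"
    by (auto simp: w_def)
  have "nov k n = (\<Sum>xs\<in>{xs. is_overpartition n xs}. \<Sum>p\<in>#mset xs. w p)"
    unfolding nov_def w_def
    by (rule sum.cong) (auto simp: sum_mset_sum_list simp flip: mset_map)
  also have "\<dots> = (\<Sum>M\<in>overpartitions n. \<Sum>p\<in>#M. w p)"
    by (rule sum.reindex_bij_betw[OF bij_betw_mset_overpartitions])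
  also have "\<dots> = (\<Sum>M\<in>overpartitions n. \<Sum>s\<in>{1..n}. (if k dvd s then s else 0) * count M (s, False))"
  proof (rule sum.cong)
    fix M assume M: "M \<in> overpartitions n"
    have "fst ` set_mset M \<subseteq> {1..n}"
    proof
      fix s assume "s \<in> fst ` set_mset M"
      then obtain p where "p \<in># M" "s = fst p" by auto
      with M show "s \<in> {1..n}"
        using part_le_if_in_overpartitions[OF M] by (auto simp: overpartitions_def)
    qed
    then show "(\<Sum>p\<in>#M. w p) = (\<Sum>s\<in>{1..n}. (if k dvd s then s else 0) * count M (s, False))"
      unfolding w_eq by (rule sum_mset_nonoverlined) simp
  qed simp
  also have "\<dots> = (\<Sum>s\<in>{1..n}. (if k dvd s then s else 0) * nonoverlined_count s n)"
    unfolding nonoverlined_count_def by (subst sum.swap) (simp add: sum_distrib_left)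
  finally show ?thesis .
qed

lemma sum_multiples_reindex:
  fixes f :: "nat \<Rightarrow> 'a::comm_monoid_add"
  assumes "0 < k" and "\<And>s. n < s \<Longrightarrow> f s = 0"
  shows "(\<Sum>s\<in>{1..n}. if k dvd s then f s else 0) = (\<Sum>j\<le>n. f (k * (j + 1)))"
proof -
  have inj: "inj_on (\<lambda>j. k * (j + 1)) {..n}"
    using assms(1) by (auto simp: inj_on_def)
  have sub: "{s \<in> {1..n}. k dvd s} \<subseteq> (\<lambda>j. k * (j + 1)) ` {..n}"
  proof
    fix s assume "s \<in> {s \<in> {1..n}. k dvd s}"
    then obtain c where s: "s \<in> {1..n}" "s = k * c" by auto
    then obtain j where "c = j + 1" by (cases c) auto
    moreover have "c \<le> s" using s assms(1) by simp
    ultimately show "s \<in> (\<lambda>j. k * (j + 1)) ` {..n}" using s by auto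
  qed
  have "(\<Sum>s\<in>{1..n}. if k dvd s then f s else 0) = (\<Sum>s\<in>{s \<in> {1..n}. k dvd s}. f s)"
    by (rule sum.inter_filter[symmetric]) simp
  also have "\<dots> = (\<Sum>s\<in>(\<lambda>j. k * (j + 1)) ` {..n}. f s)"
  proof (rule sum.mono_neutral_left[OF _ sub])
    show "\<forall>s\<in>(\<lambda>j. k * (j + 1)) ` {..n} - {s \<in> {1..n}. k dvd s}. f s = 0"
      using assms by (auto intro!: assms(2))
  qed simp
  also have "\<dots> = (\<Sum>j\<le>n. f (k * (j + 1)))"
    by (simp only: sum.reindex[OF inj] comp_def)
  finally show ?thesis .
qed

lemma nov_fps:
  assumes "0 < k"
  shows "real (nov k n) =
    real k * (overpartition_fps * (\<Sum>j\<le>n. fps_const (real (j + 1)) * multiples_fps (k * (j + 1)))) $ n"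
proof -
  have "real (nov k n) = (\<Sum>s\<in>{1..n}. if k dvd s then real s * real (nonoverlined_count s n) else 0)"
    unfolding nov_eq_sum_nonoverlined_count of_nat_sum by (intro sum.cong) auto
  also have "\<dots> = (\<Sum>j\<le>n. real (k * (j + 1)) * real (nonoverlined_count (k * (j + 1)) n))"
    by (rule sum_multiples_reindex[OF assms]) (simp add: nonoverlined_count_eq_0)
  also have "\<dots> = (\<Sum>j\<le>n. real k * (real (j + 1) * (overpartition_fps * multiples_fps (k * (j + 1))) $ n))"
    using assms by (intro sum.cong refl) (simp add: nonoverlined_count_fps algebra_simps)
  also have "\<dots> = real k *
      (overpartition_fps * (\<Sum>j\<le>n. fps_const (real (j + 1)) * multiples_fps (k * (j + 1)))) $ n"
    unfolding sum_distrib_left fps_sum_nth mult.left_commute[of overpartition_fps "fps_const _"]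
    by (simp add: sum_distrib_left)
  finally show ?thesis .
qed

section \<open>A Lambert series identity\<close>

definition multiples_quotient_fps :: "nat \<Rightarrow> 'a::comm_ring_1 fps" where
  "multiples_quotient_fps m = Abs_fps (\<lambda>t. if m dvd t then of_nat (t div m) else 0)"

lemma multiples_quotient_fps_times:
  assumes m: "0 < m"
  shows "multiples_quotient_fps m * (1 - fps_X ^ m) = (multiples_fps m :: 'a::comm_ring_1 fps)"
proof (rule fps_ext)
  fix t
  show "(multiples_quotient_fps m * (1 - fps_X ^ m)) $ t = (multiples_fps m :: 'a fps) $ t"
  proof (cases "m \<le> t")
    case False
    then have "m dvd t \<longleftrightarrow> t = 0" using m by (auto dest: dvd_imp_le)
    with False show ?thesis
      by (auto simp: ring_distribs fps_X_power_mult_right_nth multiples_fps_def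
          multiples_quotient_fps_def)
  next
    case True
    have "m dvd t - m \<longleftrightarrow> m dvd t" using True by (simp add: dvd_minus_self)
    moreover have "of_nat (t div m) - of_nat ((t - m) div m) = (1 :: 'a)" if "m dvd t"
    proof -
      obtain c where c: "t = m * c" using \<open>m dvd t\<close> by blast
      with True m have "0 < c" by (cases c) auto
      have "t - m = m * (c - 1)" using c by (simp add: right_diff_distrib')
      with c m \<open>0 < c\<close> show ?thesis by (simp add: of_nat_diff)
    qed
    ultimately show ?thesis
      using True m by (auto simp: ring_distribs fps_X_power_mult_right_nth multiples_fps_def
          multiples_quotient_fps_def)
  qed
qed

lemma multiples_quotient_fps_times_square:
  "0 < m \<Longrightarrow> multiples_quotient_fps m * (1 - fps_X ^ m) ^ 2 = (fps_X ^ m :: 'a::comm_ring_1 fps)"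
  by (simp add: power2_eq_square multiples_quotient_fps_times multiples_fps_times
      flip: mult.assoc)

lemma sum_divisors_swap:
  assumes "0 < u"
  shows "(\<Sum>d | d dvd u. of_nat d :: 'a::comm_semiring_1) = (\<Sum>d | d dvd u. of_nat (u div d))"
  by (rule sum.reindex_bij_witness[where i = "\<lambda>d. u div d" and j = "\<lambda>d. u div d"])
     (use assms in \<open>auto elim!: dvdE\<close>)

lemma sum_divisors_as_sum_atMost:
  assumes "0 < u" "u \<le> Suc n"
  shows "(\<Sum>j\<le>n. if Suc j dvd u then g (Suc j) else 0) = (\<Sum>d | d dvd u. g d)"
proof -
  have "(\<Sum>j\<le>n. if Suc j dvd u then g (Suc j) else 0) = (\<Sum>d\<in>Suc ` {..n}. if d dvd u then g d else 0)"
    by (subst sum.reindex) auto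
  also have "\<dots> = (\<Sum>d\<in>{1..Suc n}. if d dvd u then g d else 0)"
    by (simp add: image_Suc_atMost)
  also have "\<dots> = (\<Sum>d\<in>{d \<in> {1..Suc n}. d dvd u}. g d)"
    by (rule sum.inter_filter[symmetric]) simp
  also have "{d \<in> {1..Suc n}. d dvd u} = {d. d dvd u}"
    using assms by (auto dest: dvd_imp_le intro: Nat.gr0I)
  finally show ?thesis .
qed

lemma sum_atMost_divisors_swap:
  assumes "0 < u" "u \<le> Suc n"
  shows "(\<Sum>j\<le>n. if Suc j dvd u then of_nat (Suc j) else 0 :: 'a::comm_semiring_1) =
    (\<Sum>j\<le>n. if Suc j dvd u then of_nat (u div Suc j) else 0)"
proof -
  have "(\<Sum>j\<le>n. if Suc j dvd u then of_nat (Suc j) else 0 :: 'a) = (\<Sum>d | d dvd u. of_nat d)"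
    by (rule sum_divisors_as_sum_atMost[OF assms])
  also have "\<dots> = (\<Sum>d | d dvd u. of_nat (u div d))"
    by (rule sum_divisors_swap[OF assms(1)])
  also have "\<dots> = (\<Sum>j\<le>n. if Suc j dvd u then of_nat (u div Suc j) else 0)"
    by (rule sum_divisors_as_sum_atMost[OF assms, symmetric])
  finally show ?thesis .
qed

lemma lambert_series_eq_upto:
  assumes k: "0 < k"
  shows "fps_eq_upto n
    (\<Sum>j\<le>n. fps_const (of_nat (j + 1)) * multiples_fps (k * (j + 1)) :: 'a::comm_ring_1 fps)
    (\<Sum>j\<le>n. multiples_quotient_fps (k * (j + 1)))"
  unfolding fps_eq_upto_def
proof (intro allI impI)
  fix t assume t: "t \<le> n"
  have L: "(\<Sum>j\<le>n. fps_const (of_nat (j + 1)) * multiples_fps (k * (j + 1)) :: 'a fps) $ t =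
      (\<Sum>j\<le>n. if 0 < t \<and> k * (j + 1) dvd t then of_nat (j + 1) else 0)"
    unfolding fps_sum_nth by (intro sum.cong refl) (simp add: multiples_fps_def)
  have R: "(\<Sum>j\<le>n. multiples_quotient_fps (k * (j + 1)) :: 'a fps) $ t =
      (\<Sum>j\<le>n. if k * (j + 1) dvd t then of_nat (t div (k * (j + 1))) else 0)"
    by (simp only: fps_sum_nth multiples_quotient_fps_def fps_nth_Abs_fps)
  show "(\<Sum>j\<le>n. fps_const (of_nat (j + 1)) * multiples_fps (k * (j + 1)) :: 'a fps) $ t =
    (\<Sum>j\<le>n. multiples_quotient_fps (k * (j + 1))) $ t"
  proof (cases "0 < t \<and> k dvd t")
    case False
    then have t0: "t = 0" if "k * (j + 1) dvd t" for j
      using that dvd_mult_left[of k "j + 1" t] by blast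
    have "(if 0 < t \<and> k * (j + 1) dvd t then of_nat (j + 1) else 0) = (0 :: 'a)"
      "(if k * (j + 1) dvd t then of_nat (t div (k * (j + 1))) else 0) = (0 :: 'a)" for j
      using t0[of j] by auto
    then show ?thesis unfolding L R by simp
  next
    case True
    then obtain u where u: "t = k * u" by blast
    have "0 < u" using True u by (cases u) auto
    have "u \<le> t" using u k by simp
    with t have "u \<le> Suc n" by simp
    have dvd_iff: "k * (j + 1) dvd t \<longleftrightarrow> Suc j dvd u" for j
      using u k nat_mult_dvd_cancel1[of k "Suc j" u] by simp
    have div_eq: "t div (k * (j + 1)) = u div Suc j" for j
      using u k div_mult_mult1_if[of k u "Suc j"] by simp
    have "(\<Sum>j\<le>n. if 0 < t \<and> k * (j + 1) dvd t then of_nat (j + 1) else 0) =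
        (\<Sum>j\<le>n. if Suc j dvd u then of_nat (Suc j) else (0 :: 'a))"
      using True dvd_iff by (auto intro!: sum.cong)
    also have "\<dots> = (\<Sum>j\<le>n. if Suc j dvd u then of_nat (u div Suc j) else 0)"
      by (rule sum_atMost_divisors_swap[OF \<open>0 < u\<close> \<open>u \<le> Suc n\<close>])
    also have "\<dots> = (\<Sum>j\<le>n. if k * (j + 1) dvd t then of_nat (t div (k * (j + 1))) else 0)"
      using dvd_iff div_eq by (auto intro!: sum.cong)
    finally show ?thesis unfolding L R .
  qed
qed

section \<open>Moments of Laurent polynomials\<close>

definition fls_supp :: "'a::zero fls \<Rightarrow> int set" where
  "fls_supp f = {m. f $$ m \<noteq> 0}"

definition fls_moment :: "nat \<Rightarrow> 'a::comm_ring_1 fls \<Rightarrow> 'a" where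
  "fls_moment r f = (\<Sum>m\<in>fls_supp f. of_int m ^ r * f $$ m)"

lemma fls_moment_0 [simp]: "fls_moment r 0 = 0"
  by (simp add: fls_moment_def fls_supp_def)

lemma fls_moment_eq_sum:
  "finite A \<Longrightarrow> fls_supp f \<subseteq> A \<Longrightarrow> fls_moment r f = (\<Sum>m\<in>A. of_int m ^ r * f $$ m)"
  unfolding fls_moment_def by (rule sum.mono_neutral_left) (auto simp: fls_supp_def)

lemma fls_supp_add: "fls_supp (f + g) \<subseteq> fls_supp f \<union> fls_supp g"
  by (auto simp: fls_supp_def)

lemma fls_moment_add:
  assumes "finite (fls_supp f)" "finite (fls_supp g)"
  shows "fls_moment r (f + g) = fls_moment r f + fls_moment r g"
proof -
  let ?A = "fls_supp f \<union> fls_supp g"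
  have "finite ?A" using assms by simp
  then show ?thesis
    using fls_supp_add[of f g]
    by (simp add: fls_moment_eq_sum[of ?A] sum.distrib ring_distribs)
qed

lemma fls_supp_uminus [simp]: "fls_supp (- f) = fls_supp f"
  by (simp add: fls_supp_def)

lemma fls_moment_uminus: "fls_moment r (- f) = - fls_moment r f"
  by (simp add: fls_moment_def sum_negf)

lemma finite_fls_supp_sum:
  "(\<And>i. i \<in> I \<Longrightarrow> finite (fls_supp (f i))) \<Longrightarrow> finite (fls_supp (\<Sum>i\<in>I. f i))"
proof (induction I rule: infinite_finite_induct)
  case (insert x F)
  then show ?case
    using fls_supp_add[of "f x" "sum f F"] by (auto intro: finite_subset)
qed (simp_all add: fls_supp_def)

lemma fls_moment_sum:
  "(\<And>i. i \<in> I \<Longrightarrow> finite (fls_supp (f i))) \<Longrightarrow>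
     fls_moment r (\<Sum>i\<in>I. f i) = (\<Sum>i\<in>I. fls_moment r (f i))"
proof (induction I rule: infinite_finite_induct)
  case (insert x F)
  then show ?case by (simp add: fls_moment_add finite_fls_supp_sum)
qed (simp_all add: fls_moment_def fls_supp_def)

lemma fls_times_nth_supp:
  fixes f g :: "'a::comm_ring_1 fls"
  assumes "finite (fls_supp f)"
  shows "(f * g) $$ n = (\<Sum>a\<in>fls_supp f. f $$ a * g $$ (n - a))"
proof -
  define I where "I = {fls_subdegree f..n - fls_subdegree g}"
  have "(f * g) $$ n = (\<Sum>a\<in>I. f $$ a * g $$ (n - a))"
    unfolding I_def by (rule fls_times_nth(2))
  also have "\<dots> = (\<Sum>a\<in>I \<inter> fls_supp f. f $$ a * g $$ (n - a))"
    by (rule sum.mono_neutral_right) (auto simp: I_def fls_supp_def)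
  also have "\<dots> = (\<Sum>a\<in>fls_supp f. f $$ a * g $$ (n - a))"
  proof (rule sum.mono_neutral_left[OF assms])
    show "\<forall>a\<in>fls_supp f - I \<inter> fls_supp f. f $$ a * g $$ (n - a) = 0"
    proof
      fix a assume a: "a \<in> fls_supp f - I \<inter> fls_supp f"
      then have "fls_subdegree f \<le> a" by (intro fls_subdegree_leI) (simp add: fls_supp_def)
      with a have "n - a < fls_subdegree g" by (auto simp: I_def)
      then show "f $$ a * g $$ (n - a) = 0" by simp
    qed
  qed auto
  finally show ?thesis .
qed

lemma fls_supp_mult:
  fixes f g :: "'a::comm_ring_1 fls"
  assumes "finite (fls_supp f)"
  shows "fls_supp (f * g) \<subseteq> (\<lambda>(a, b). a + b) ` (fls_supp f \<times> fls_supp g)"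
proof
  fix n assume "n \<in> fls_supp (f * g)"
  then have "(\<Sum>a\<in>fls_supp f. f $$ a * g $$ (n - a)) \<noteq> 0"
    by (simp add: fls_times_nth_supp[OF assms] fls_supp_def)
  then obtain a where "a \<in> fls_supp f" "f $$ a * g $$ (n - a) \<noteq> 0"
    by (meson sum.not_neutral_contains_not_neutral)
  then show "n \<in> (\<lambda>(a, b). a + b) ` (fls_supp f \<times> fls_supp g)"
    by (intro image_eqI[of _ _ "(a, n - a)"]) (auto simp: fls_supp_def)
qed

lemma finite_fls_supp_mult:
  fixes f g :: "'a::comm_ring_1 fls"
  shows "finite (fls_supp f) \<Longrightarrow> finite (fls_supp g) \<Longrightarrow> finite (fls_supp (f * g))"
  by (rule finite_subset[OF fls_supp_mult]) auto

lemma fls_moment_mult: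
  assumes f: "finite (fls_supp f)" and g: "finite (fls_supp g)"
  shows "fls_moment r (f * g) =
    (\<Sum>a\<in>fls_supp f. \<Sum>b\<in>fls_supp g. of_int (a + b) ^ r * (f $$ a * g $$ b))"
proof -
  define S where "S = (\<lambda>(a, b). a + b) ` (fls_supp f \<times> fls_supp g)"
  have S: "finite S" using f g by (simp add: S_def)
  have "fls_moment r (f * g) = (\<Sum>n\<in>S. of_int n ^ r * (f * g) $$ n)"
    using S fls_supp_mult[OF f, of g] unfolding S_def by (rule fls_moment_eq_sum)
  also have "\<dots> = (\<Sum>n\<in>S. \<Sum>a\<in>fls_supp f. of_int n ^ r * (f $$ a * g $$ (n - a)))"
    by (simp add: fls_times_nth_supp[OF f] sum_distrib_left)
  also have "\<dots> = (\<Sum>a\<in>fls_supp f. \<Sum>n\<in>S. of_int n ^ r * (f $$ a * g $$ (n - a)))"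
    by (rule sum.swap)
  also have "\<dots> = (\<Sum>a\<in>fls_supp f. \<Sum>b\<in>fls_supp g. of_int (a + b) ^ r * (f $$ a * g $$ b))"
  proof (rule sum.cong)
    fix a assume a: "a \<in> fls_supp f"
    have "(\<Sum>n\<in>S. of_int n ^ r * (f $$ a * g $$ (n - a))) =
          (\<Sum>n\<in>(+) a ` fls_supp g. of_int n ^ r * (f $$ a * g $$ (n - a)))"
    proof (rule sum.mono_neutral_right[OF S])
      show "(+) a ` fls_supp g \<subseteq> S" using a unfolding S_def by auto
      show "\<forall>n\<in>S - (+) a ` fls_supp g. of_int n ^ r * (f $$ a * g $$ (n - a)) = 0"
      proof
        fix n assume "n \<in> S - (+) a ` fls_supp g"
        then have "n - a \<notin> fls_supp g"
          by (metis DiffD2 add_diff_cancel_left' diff_add_cancel image_eqI)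
        then show "of_int n ^ r * (f $$ a * g $$ (n - a)) = 0" by (simp add: fls_supp_def)
      qed
    qed
    also have "\<dots> = (\<Sum>b\<in>fls_supp g. of_int (a + b) ^ r * (f $$ a * g $$ b))"
      by (subst sum.reindex) (auto simp: inj_on_def)
    finally show "(\<Sum>n\<in>S. of_int n ^ r * (f $$ a * g $$ (n - a))) =
      (\<Sum>b\<in>fls_supp g. of_int (a + b) ^ r * (f $$ a * g $$ b))" .
  qed simp
  finally show ?thesis .
qed

lemma fls_moment_mult_0:
  assumes "finite (fls_supp f)" "finite (fls_supp g)"
  shows "fls_moment 0 (f * g) = fls_moment 0 f * fls_moment 0 g"
  unfolding fls_moment_mult[OF assms] by (simp add: fls_moment_def sum_product)

lemma fls_moment_mult_1:
  assumes "finite (fls_supp f)" "finite (fls_supp g)"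
  shows "fls_moment 1 (f * g) = fls_moment 1 f * fls_moment 0 g + fls_moment 0 f * fls_moment 1 g"
proof -
  have "fls_moment 1 (f * g) = (\<Sum>a\<in>fls_supp f. \<Sum>b\<in>fls_supp g.
      (of_int a * f $$ a) * g $$ b + f $$ a * (of_int b * g $$ b))"
    unfolding fls_moment_mult[OF assms] by (intro sum.cong refl) (simp add: algebra_simps)
  also have "\<dots> = fls_moment 1 f * fls_moment 0 g + fls_moment 0 f * fls_moment 1 g"
    by (simp add: sum.distrib fls_moment_def sum_product)
  finally show ?thesis .
qed

lemma fls_moment_mult_2:
  assumes "finite (fls_supp f)" "finite (fls_supp g)"
  shows "fls_moment 2 (f * g) =
    fls_moment 2 f * fls_moment 0 g + 2 * (fls_moment 1 f * fls_moment 1 g) +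
    fls_moment 0 f * fls_moment 2 g"
proof -
  have "fls_moment 2 (f * g) = (\<Sum>a\<in>fls_supp f. \<Sum>b\<in>fls_supp g.
      (of_int a ^ 2 * f $$ a) * g $$ b + 2 * ((of_int a * f $$ a) * (of_int b * g $$ b)) +
      f $$ a * (of_int b ^ 2 * g $$ b))"
    unfolding fls_moment_mult[OF assms]
    by (intro sum.cong refl) (simp add: power2_eq_square algebra_simps)
  also have "\<dots> = (\<Sum>a\<in>fls_supp f. \<Sum>b\<in>fls_supp g. (of_int a ^ 2 * f $$ a) * g $$ b) +
      2 * (\<Sum>a\<in>fls_supp f. \<Sum>b\<in>fls_supp g. (of_int a * f $$ a) * (of_int b * g $$ b)) +
      (\<Sum>a\<in>fls_supp f. \<Sum>b\<in>fls_supp g. f $$ a * (of_int b ^ 2 * g $$ b))"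
    by (simp add: sum.distrib sum_distrib_left)
  also have "\<dots> = fls_moment 2 f * fls_moment 0 g + 2 * (fls_moment 1 f * fls_moment 1 g) +
      fls_moment 0 f * fls_moment 2 g"
    by (simp add: fls_moment_def sum_product)
  finally show ?thesis .
qed

lemma fls_moment_1: "fls_moment r 1 = 0 ^ r"
  by (subst fls_moment_eq_sum[of "{0}"]) (auto simp: fls_supp_def)

lemma fls_moment_X: "fls_moment r fls_X = 1"
  by (subst fls_moment_eq_sum[of "{1}"]) (auto simp: fls_supp_def)

lemma fls_moment_X_inv: "fls_moment r fls_X_inv = (- 1) ^ r"
  by (subst fls_moment_eq_sum[of "{-1}"]) (auto simp: fls_supp_def)

lemma finite_fls_supp_1: "finite (fls_supp 1)"
  by (rule finite_subset[of _ "{0}"]) (auto simp: fls_supp_def)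

lemma finite_fls_supp_X: "finite (fls_supp fls_X)"
  by (rule finite_subset[of _ "{1}"]) (auto simp: fls_supp_def)

lemma finite_fls_supp_X_inv: "finite (fls_supp fls_X_inv)"
  by (rule finite_subset[of _ "{-1}"]) (auto simp: fls_supp_def)

lemma infsum_eq_fls_moment:
  fixes f :: "'a::{comm_ring_1, t2_space} fls"
  assumes "finite (fls_supp f)"
  shows "(\<Sum>\<^sub>\<infinity>m\<in>UNIV. of_int m ^ r * f $$ m) = fls_moment r f"
proof -
  have "(\<Sum>\<^sub>\<infinity>m\<in>UNIV. of_int m ^ r * f $$ m) = (\<Sum>\<^sub>\<infinity>m\<in>fls_supp f. of_int m ^ r * f $$ m)"
    by (rule infsum_cong_neutral) (auto simp: fls_supp_def)
  also have "\<dots> = fls_moment r f"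
    using assms by (simp add: fls_moment_def)
  finally show ?thesis .
qed

section \<open>Moments of power series with Laurent polynomial coefficients\<close>

definition finite_coeff_supp :: "'a::zero fls fps \<Rightarrow> bool" where
  "finite_coeff_supp F \<longleftrightarrow> (\<forall>j. finite (fls_supp (F $ j)))"

definition fps_moment :: "nat \<Rightarrow> 'a::comm_ring_1 fls fps \<Rightarrow> 'a fps" where
  "fps_moment r F = Abs_fps (\<lambda>j. fls_moment r (F $ j))"

definition has_moments :: "'a::comm_ring_1 fls fps \<Rightarrow> 'a fps \<Rightarrow> 'a fps \<Rightarrow> 'a fps \<Rightarrow> bool" where
  "has_moments F m0 m1 m2 \<longleftrightarrow>
     finite_coeff_supp F \<and> fps_moment 0 F = m0 \<and> fps_moment 1 F = m1 \<and> fps_moment 2 F = m2"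

lemma fps_moment_nth [simp]: "fps_moment r F $ j = fls_moment r (F $ j)"
  by (simp add: fps_moment_def)

lemma finite_coeff_supp_mult:
  fixes F G :: "'a::comm_ring_1 fls fps"
  shows "finite_coeff_supp F \<Longrightarrow> finite_coeff_supp G \<Longrightarrow> finite_coeff_supp (F * G)"
  unfolding finite_coeff_supp_def fps_mult_nth
  by (auto intro!: finite_fls_supp_sum finite_fls_supp_mult)

lemma has_moments_mult:
  assumes "has_moments F a b c" "has_moments G a' b' c'"
  shows "has_moments (F * G) (a * a') (a * b' + b * a') (c * a' + 2 * (b * b') + a * c')"
proof -
  have F: "finite (fls_supp (F $ i))" and G: "finite (fls_supp (G $ i))" for i
    using assms by (auto simp: has_moments_def finite_coeff_supp_def)
  have nth: "fls_moment r ((F * G) $ j) = (\<Sum>i=0..j. fls_moment r (F $ i * G $ (j - i)))" for r j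
    unfolding fps_mult_nth by (rule fls_moment_sum) (simp add: finite_fls_supp_mult F G)
  have m: "fps_moment 0 F = a" "fps_moment 1 F = b" "fps_moment 2 F = c"
    "fps_moment 0 G = a'" "fps_moment 1 G = b'" "fps_moment 2 G = c'"
    using assms by (auto simp: has_moments_def)
  have "fps_moment 0 (F * G) = a * a'"
  proof (rule fps_ext)
    fix j show "fps_moment 0 (F * G) $ j = (a * a') $ j"
      unfolding fps_moment_nth nth
      unfolding fls_moment_mult_0[OF F G] fps_mult_nth m[symmetric] fps_moment_nth ..
  qed
  moreover have "fps_moment 1 (F * G) = a * b' + b * a'"
  proof (rule fps_ext)
    fix j show "fps_moment 1 (F * G) $ j = (a * b' + b * a') $ j"
      unfolding fps_moment_nth nth
      unfolding fls_moment_mult_1[OF F G] fps_add_nth fps_mult_nth m[symmetric] fps_moment_nth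
      by (simp add: sum.distrib algebra_simps)
  qed
  moreover have "fps_moment 2 (F * G) = c * a' + 2 * (b * b') + a * c'"
  proof (rule fps_ext)
    fix j show "fps_moment 2 (F * G) $ j = (c * a' + 2 * (b * b') + a * c') $ j"
      unfolding fps_moment_nth nth
      unfolding fls_moment_mult_2[OF F G] mult_2 fps_add_nth fps_mult_nth m[symmetric] fps_moment_nth
      by (simp add: sum.distrib sum_distrib_left algebra_simps)
  qed
  ultimately show ?thesis
    using assms by (simp add: has_moments_def finite_coeff_supp_mult)
qed

lemma has_moments_unique:
  "has_moments F a b c \<Longrightarrow> has_moments F a' b' c' \<Longrightarrow> a = a' \<and> b = b' \<and> c = c'"
  by (simp add: has_moments_def)

lemma has_moments_add:
  assumes "has_moments F a b c" "has_moments G a' b' c'"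
  shows "has_moments (F + G) (a + a') (b + b') (c + c')"
proof -
  have F: "finite (fls_supp (F $ i))" and G: "finite (fls_supp (G $ i))" for i
    using assms by (auto simp: has_moments_def finite_coeff_supp_def)
  have "fls_supp ((F + G) $ i) \<subseteq> fls_supp (F $ i) \<union> fls_supp (G $ i)" for i
    using fls_supp_add by simp
  then have "finite_coeff_supp (F + G)"
    unfolding finite_coeff_supp_def using F G by (meson finite_Un finite_subset)
  with assms show ?thesis
    by (auto simp: has_moments_def fps_eq_iff fls_moment_add F G)
qed

lemma has_moments_uminus: "has_moments F a b c \<Longrightarrow> has_moments (- F) (- a) (- b) (- c)"
  by (auto simp: has_moments_def finite_coeff_supp_def fps_eq_iff fls_moment_uminus)

lemma has_moments_diff:
  "has_moments F a b c \<Longrightarrow> has_moments G a' b' c' \<Longrightarrow>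
     has_moments (F - G) (a - a') (b - b') (c - c')"
  using has_moments_add[of F a b c "- G" "- a'" "- b'" "- c'"] has_moments_uminus[of G a' b' c']
  by simp

lemma has_moments_1: "has_moments 1 1 0 0"
  by (auto simp: has_moments_def finite_coeff_supp_def fps_eq_iff fls_moment_1 finite_fls_supp_1
      fls_supp_def)

lemma has_moments_fps_X: "has_moments fps_X fps_X 0 0"
  by (auto simp: has_moments_def finite_coeff_supp_def fps_eq_iff fls_moment_1 finite_fls_supp_1
      fls_supp_def)

lemma has_moments_const_X: "has_moments (fps_const fls_X) 1 1 1"
  by (auto simp: has_moments_def finite_coeff_supp_def fps_eq_iff fls_moment_X finite_fls_supp_X
      fls_supp_def fls_moment_def)

lemma has_moments_const_X_inv: "has_moments (fps_const fls_X_inv) 1 (- 1) 1"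
  by (auto simp: has_moments_def finite_coeff_supp_def fps_eq_iff fls_moment_X_inv
      finite_fls_supp_X_inv fls_supp_def fls_moment_def)

lemma has_moments_power: "has_moments F a 0 0 \<Longrightarrow> has_moments (F ^ m) (a ^ m) 0 0"
  by (induction m) (use has_moments_1 has_moments_mult in fastforce)+

lemma has_moments_prod:
  "(\<And>i. i \<in> I \<Longrightarrow> has_moments (F i) (a i) 0 0) \<Longrightarrow>
     has_moments (\<Prod>i\<in>I. F i) (\<Prod>i\<in>I. a i) 0 0"
proof (induction I rule: infinite_finite_induct)
  case (insert x I)
  then show ?case using has_moments_mult[of "F x" "a x" 0 0 "prod F I" "prod a I" 0 0] by simp
qed (simp_all add: has_moments_1)

text \<open>As \<open>F $ 0 = 1\<close>, each coefficient of \<open>G\<close> is a finite combination of coefficients of \<open>F\<close>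
  and \<open>H\<close>.\<close>

lemma finite_coeff_supp_divide:
  fixes F G H :: "'a::comm_ring_1 fls fps"
  assumes "G * F = H" "finite_coeff_supp F" "finite_coeff_supp H" "F $ 0 = 1"
  shows "finite_coeff_supp G"
  unfolding finite_coeff_supp_def
proof
  fix j show "finite (fls_supp (G $ j))"
  proof (induction j rule: less_induct)
    case (less j)
    have "H $ j = (\<Sum>i=0..j. G $ i * F $ (j - i))" by (simp only: assms(1)[symmetric] fps_mult_nth)
    also have "\<dots> = G $ j + (\<Sum>i<j. G $ i * F $ (j - i))"
      using assms(4) by (simp add: atLeast0AtMost sum.atMost_Suc lessThan_Suc_atMost[symmetric]
          add.commute)
    finally have "G $ j = H $ j - (\<Sum>i<j. G $ i * F $ (j - i))" by (simp add: algebra_simps)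
    moreover have "finite (fls_supp (\<Sum>i<j. G $ i * F $ (j - i)))"
      using less assms(2) by (auto intro!: finite_fls_supp_sum finite_fls_supp_mult
          simp: finite_coeff_supp_def)
    ultimately show ?case
      using assms(3) fls_supp_add[of "H $ j" "- (\<Sum>i<j. G $ i * F $ (j - i))"]
      by (auto simp: finite_coeff_supp_def intro: finite_subset)
  qed
qed

lemma has_moments_qpoch_factor:
  assumes "has_moments a \<alpha> \<mu> \<nu>" "has_moments b \<beta> 0 0"
  shows "has_moments (1 - a * b ^ i) (1 - \<alpha> * \<beta> ^ i) (- (\<mu> * \<beta> ^ i)) (- (\<nu> * \<beta> ^ i))"
  using has_moments_diff[OF has_moments_1 has_moments_mult[OF assms(1) has_moments_power[OF assms(2)]]]
  by simp

lemma has_moments_qpoch_trunc: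
  "has_moments a \<alpha> 0 0 \<Longrightarrow> has_moments b \<beta> 0 0 \<Longrightarrow>
     has_moments (qpoch_trunc a b n) (qpoch_trunc \<alpha> \<beta> n) 0 0"
  unfolding qpoch_trunc_def by (rule has_moments_prod) (use has_moments_qpoch_factor in fastforce)

text \<open>Paired factors \<open>(1 - zy)(1 - y/z)\<close> have moments \<open>((1 - y)\<^sup>2, 0, -2y)\<close>; writing
  \<open>y = d (1 - y)\<^sup>2\<close> makes the second moment of the product a multiple of the zeroth one.\<close>

lemma has_moments_prod_symmetric:
  assumes "\<And>i. i \<in> I \<Longrightarrow> has_moments (W i) ((1 - y i) ^ 2) 0 (- 2 * y i)"
    and "\<And>i. i \<in> I \<Longrightarrow> d i * (1 - y i) ^ 2 = y i"
  shows "has_moments (\<Prod>i\<in>I. W i) (\<Prod>i\<in>I. (1 - y i) ^ 2) 0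
    (- 2 * (\<Prod>i\<in>I. (1 - y i) ^ 2) * (\<Sum>i\<in>I. d i))"
  using assms
proof (induction I rule: infinite_finite_induct)
  case (insert x I)
  define A where "A = (\<Prod>i\<in>I. (1 - y i) ^ 2)"
  have "has_moments (W x * (\<Prod>i\<in>I. W i)) ((1 - y x) ^ 2 * A) 0
      (- 2 * (d x * (1 - y x) ^ 2) * A + - 2 * (1 - y x) ^ 2 * A * (\<Sum>i\<in>I. d i))"
    using has_moments_mult[OF insert.prems(1) insert.IH] insert by (simp add: A_def algebra_simps)
  then show ?case
    using insert.hyps by (simp add: A_def algebra_simps)
qed (simp_all add: has_moments_1)

lemma has_moments_symmetric_factor:
  assumes "has_moments a \<alpha> 0 0" "has_moments b \<beta> 0 0"
  shows "has_moments ((1 - fps_const fls_X * a * b ^ i) * (1 - a * fps_const fls_X_inv * b ^ i))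
    ((1 - \<alpha> * \<beta> ^ i) ^ 2) 0 (- 2 * (\<alpha> * \<beta> ^ i))"
proof -
  have za: "has_moments (fps_const fls_X * a) \<alpha> \<alpha> \<alpha>"
    using has_moments_mult[OF has_moments_const_X assms(1)] by simp
  have az: "has_moments (a * fps_const fls_X_inv) \<alpha> (- \<alpha>) \<alpha>"
    using has_moments_mult[OF assms(1) has_moments_const_X_inv] by simp
  from has_moments_mult[OF has_moments_qpoch_factor[OF za assms(2), where i = i]
      has_moments_qpoch_factor[OF az assms(2), where i = i]]
  show ?thesis by (simp add: power2_eq_square algebra_simps)
qed

section \<open>The generating function\<close>

definition GF_trunc :: "nat \<Rightarrow> nat \<Rightarrow> ser" where
  "GF_trunc k n =
     qpoch_trunc (qv ^ k) (qv ^ k) n * (qpoch_trunc (- qv) qv n / qpoch_trunc qv qv n) *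
     (qpoch_trunc (qv ^ k) (qv ^ k) n /
       (qpoch_trunc (zv * qv ^ k) (qv ^ k) n * qpoch_trunc (qv ^ k * zinv) (qv ^ k) n))"

lemma GF_arguments_nth_0:
  assumes "0 < k"
  shows "(qv ^ k :: ser) $ 0 = 0" "(qv :: ser) $ 0 = 0" "(- qv :: ser) $ 0 = 0"
    "(zv * qv ^ k :: ser) $ 0 = 0" "(qv ^ k * zinv :: ser) $ 0 = 0"
  using assms by (simp_all add: qv_def)

lemma GF_eq_upto_GF_trunc:
  assumes "0 < k"
  shows "fps_eq_upto n (GF k) (GF_trunc k n)"
proof -
  note z = GF_arguments_nth_0[OF assms]
  note trunc = qpoch_eq_upto_trunc
  have "fps_eq_upto n (qpoch (zv * qv ^ k) (qv ^ k) * qpoch (qv ^ k * zinv) (qv ^ k))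
      (qpoch_trunc (zv * qv ^ k) (qv ^ k) n * qpoch_trunc (qv ^ k * zinv) (qv ^ k) n)"
    by (intro fps_eq_upto_mult trunc z)
  moreover from this have "(qpoch (zv * qv ^ k) (qv ^ k) * qpoch (qv ^ k * zinv) (qv ^ k)) $ 0 =
      (qpoch_trunc (zv * qv ^ k) (qv ^ k) n * qpoch_trunc (qv ^ k * zinv) (qv ^ k) n) $ 0"
    unfolding fps_eq_upto_def by blast
  then have "(qpoch (zv * qv ^ k) (qv ^ k) * qpoch (qv ^ k * zinv) (qv ^ k)) $ 0 \<noteq> 0"
    using z by (simp only: fps_mult_nth_0 qpoch_trunc_nth_0) simp
  moreover have "qpoch qv qv $ 0 \<noteq> 0"
    using trunc[OF z(2) z(2), of n] z by (simp add: fps_eq_upto_def qpoch_trunc_nth_0)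
  ultimately show ?thesis
    unfolding GF_def Pbar_def Cz_def GF_trunc_def
    by (intro fps_eq_upto_mult fps_eq_upto_divide trunc z)
qed

lemma GF_trunc_mult:
  assumes "0 < k"
  shows "GF_trunc k n * (qpoch_trunc qv qv n *
      (qpoch_trunc (zv * qv ^ k) (qv ^ k) n * qpoch_trunc (qv ^ k * zinv) (qv ^ k) n)) =
    qpoch_trunc (qv ^ k) (qv ^ k) n * qpoch_trunc (- qv) qv n * qpoch_trunc (qv ^ k) (qv ^ k) n"
proof -
  note z = GF_arguments_nth_0[OF assms]
  define Z where "Z = qpoch_trunc (zv * qv ^ k) (qv ^ k) n * qpoch_trunc (qv ^ k * zinv) (qv ^ k) n"
  have "qpoch_trunc qv qv n $ 0 \<noteq> 0" "Z $ 0 \<noteq> 0"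
    using z by (simp_all add: Z_def qpoch_trunc_nth_0)
  then have "inverse (qpoch_trunc qv qv n) * qpoch_trunc qv qv n = 1" "inverse Z * Z = 1"
    by (simp_all add: inverse_mult_eq_1)
  moreover have "GF_trunc k n * (qpoch_trunc qv qv n * Z) =
      qpoch_trunc (qv ^ k) (qv ^ k) n * qpoch_trunc (- qv) qv n * qpoch_trunc (qv ^ k) (qv ^ k) n *
      (inverse (qpoch_trunc qv qv n) * qpoch_trunc qv qv n) * (inverse Z * Z)"
    unfolding GF_trunc_def Z_def[symmetric] fps_divide_unit[OF \<open>Z $ 0 \<noteq> 0\<close>]
      fps_divide_unit[OF \<open>qpoch_trunc qv qv n $ 0 \<noteq> 0\<close>]
    by (simp only: mult_ac)
  ultimately show ?thesis unfolding Z_def by simp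
qed

lemma has_moments_qv: "has_moments qv fps_X 0 0"
  unfolding qv_def by (rule has_moments_fps_X)

lemma has_moments_Cz_denominator:
  assumes "0 < k"
  shows "has_moments (qpoch_trunc (zv * qv ^ k) (qv ^ k) n * qpoch_trunc (qv ^ k * zinv) (qv ^ k) n)
    (qpoch_trunc (fps_X ^ k) (fps_X ^ k) n ^ 2) 0
    (- 2 * qpoch_trunc (fps_X ^ k) (fps_X ^ k) n ^ 2 * (\<Sum>i\<le>n. multiples_quotient_fps (k * (i + 1))))"
proof -
  define y where "y i = (fps_X ^ k * (fps_X ^ k) ^ i :: real fps)" for i
  have "y i = fps_X ^ (k * (i + 1))" for i
    by (simp add: y_def power_mult[symmetric] power_add[symmetric] algebra_simps)
  then have "multiples_quotient_fps (k * (i + 1)) * (1 - y i) ^ 2 = y i" for i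
    using assms by (simp add: multiples_quotient_fps_times_square)
  with has_moments_symmetric_factor[OF has_moments_power[OF has_moments_qv]
      has_moments_power[OF has_moments_qv]]
  have "has_moments (\<Prod>i\<le>n. (1 - zv * qv ^ k * (qv ^ k) ^ i) * (1 - qv ^ k * zinv * (qv ^ k) ^ i))
      (\<Prod>i\<le>n. (1 - y i) ^ 2) 0
      (- 2 * (\<Prod>i\<le>n. (1 - y i) ^ 2) * (\<Sum>i\<le>n. multiples_quotient_fps (k * (i + 1))))"
    unfolding zv_def zinv_def y_def by (intro has_moments_prod_symmetric)
  then show ?thesis
    by (simp add: qpoch_trunc_def y_def prod.distrib power_mult_distrib prod_power_distrib)
qed

lemma has_moments_GF_trunc_denominator:
  assumes "0 < k"
  shows "has_moments (qpoch_trunc qv qv n *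
      (qpoch_trunc (zv * qv ^ k) (qv ^ k) n * qpoch_trunc (qv ^ k * zinv) (qv ^ k) n))
    (qpoch_trunc fps_X fps_X n * qpoch_trunc (fps_X ^ k) (fps_X ^ k) n ^ 2) 0
    (- 2 * (qpoch_trunc fps_X fps_X n * qpoch_trunc (fps_X ^ k) (fps_X ^ k) n ^ 2 *
      (\<Sum>i\<le>n. multiples_quotient_fps (k * (i + 1)))))"
  using has_moments_mult[OF has_moments_qpoch_trunc[OF has_moments_qv has_moments_qv]
      has_moments_Cz_denominator[OF assms]]
  by (simp add: algebra_simps)

lemma has_moments_GF_trunc_numerator:
  "has_moments (qpoch_trunc (qv ^ k) (qv ^ k) n * qpoch_trunc (- qv) qv n * qpoch_trunc (qv ^ k) (qv ^ k) n)
    (qpoch_trunc (fps_X ^ k) (fps_X ^ k) n * qpoch_trunc (- fps_X) fps_X n *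
      qpoch_trunc (fps_X ^ k) (fps_X ^ k) n) 0 0"
proof -
  have E: "has_moments (qpoch_trunc (qv ^ k) (qv ^ k) n) (qpoch_trunc (fps_X ^ k) (fps_X ^ k) n) 0 0"
    by (intro has_moments_qpoch_trunc has_moments_power has_moments_qv)
  have "has_moments (qpoch_trunc (- qv) qv n) (qpoch_trunc (- fps_X) fps_X n) 0 0"
    using has_moments_uminus[OF has_moments_qv] by (intro has_moments_qpoch_trunc has_moments_qv) simp
  from has_moments_mult[OF has_moments_mult[OF E this] E] show ?thesis by simp
qed

text \<open>The moments of both sides of \<open>GF_trunc_mult\<close> agree; as the right-hand side has vanishing
  second moment, this forces \<open>g\<^sub>2 = 2 g\<^sub>0 T\<close> for the moments \<open>g\<^sub>r\<close> of \<open>GF_trunc k n\<close>.\<close>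

lemma fps_moments_GF_trunc:
  fixes k n :: nat
  assumes "0 < k"
  defines "T \<equiv> \<Sum>i\<le>n. multiples_quotient_fps (k * (i + 1))"
  shows "finite_coeff_supp (GF_trunc k n)"
    and "fps_moment 0 (GF_trunc k n) = bounded_overpartition_fps (Suc n)"
    and "fps_moment 2 (GF_trunc k n) = 2 * bounded_overpartition_fps (Suc n) * T"
proof -
  define Z where "Z = qpoch_trunc (zv * qv ^ k) (qv ^ k) n * qpoch_trunc (qv ^ k * zinv) (qv ^ k) n"
  define e where "e = (qpoch_trunc (fps_X ^ k) (fps_X ^ k) n :: real fps)"
  define pm where "pm = (qpoch_trunc (- fps_X) fps_X n :: real fps)"
  define pp where "pp = (qpoch_trunc fps_X fps_X n :: real fps)"
  note denom = has_moments_GF_trunc_denominator[OF assms(1), of n, folded Z_def e_def pp_def T_def]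
  note numer = has_moments_GF_trunc_numerator[of k n, folded e_def pm_def]
  note mult = GF_trunc_mult[OF assms(1), of n, folded Z_def]
  have "(qpoch_trunc qv qv n * Z) $ 0 = 1"
    using GF_arguments_nth_0[OF assms(1)] by (simp add: Z_def qpoch_trunc_nth_0)
  with mult show fin: "finite_coeff_supp (GF_trunc k n)"
    using denom numer unfolding has_moments_def by (blast intro: finite_coeff_supp_divide)
  define g0 where "g0 = fps_moment 0 (GF_trunc k n)"
  define g1 where "g1 = fps_moment 1 (GF_trunc k n)"
  define g2 where "g2 = fps_moment 2 (GF_trunc k n)"
  have "has_moments (GF_trunc k n) g0 g1 g2"
    using fin by (simp add: has_moments_def g0_def g1_def g2_def)
  from has_moments_unique[OF has_moments_mult[OF this denom, unfolded mult] numer]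
  have m0: "g0 * (pp * e ^ 2) = e * pm * e"
    and m2: "g2 * (pp * e ^ 2) + 2 * (g1 * 0) + g0 * (- 2 * (pp * e ^ 2 * T)) = 0"
    by auto
  have "e $ 0 = 1" "pp $ 0 = 1"
    using assms(1) by (simp_all add: e_def pp_def qpoch_trunc_nth_0)
  then have "e \<noteq> 0" "pp \<noteq> 0" by auto
  from m0 \<open>e \<noteq> 0\<close> have "g0 * pp = bounded_overpartition_fps (Suc n) * pp"
    using bounded_overpartition_fps_qpoch_trunc[of n] unfolding pp_def pm_def
    by (simp add: power2_eq_square mult_ac)
  with \<open>pp \<noteq> 0\<close> show g0: "fps_moment 0 (GF_trunc k n) = bounded_overpartition_fps (Suc n)"
    unfolding g0_def by simp
  have "(g2 - 2 * g0 * T) * (pp * e ^ 2) = 0"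
    using m2 by (simp add: algebra_simps)
  with \<open>e \<noteq> 0\<close> \<open>pp \<noteq> 0\<close> show "fps_moment 2 (GF_trunc k n) = 2 * bounded_overpartition_fps (Suc n) * T"
    using g0 unfolding g0_def g2_def by simp
qed

lemma Mbar2_eq:
  assumes "0 < k"
  shows "Mbar2 k n =
    2 * (bounded_overpartition_fps (Suc n) * (\<Sum>i\<le>n. multiples_quotient_fps (k * (i + 1)))) $ n"
proof -
  have "GF k $ n = GF_trunc k n $ n"
    using GF_eq_upto_GF_trunc[OF assms, of n] by (simp add: fps_eq_upto_def)
  then have "Mbar2 k n = fls_moment 2 (GF_trunc k n $ n)"
    using fps_moments_GF_trunc(1)[OF assms, of n]
    by (simp add: Mbar2_def Mbar_def infsum_eq_fls_moment finite_coeff_supp_def)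
  also have "\<dots> = 2 * (bounded_overpartition_fps (Suc n) * (\<Sum>i\<le>n. multiples_quotient_fps (k * (i + 1)))) $ n"
    using fps_moments_GF_trunc(3)[OF assms, of n] fps_moment_nth[of 2 "GF_trunc k n" n]
    by (simp add: mult.assoc)
  finally show ?thesis .
qed

theorem mainTheorem2:
  fixes k n :: nat
  assumes "1 \<le> k"
  shows "real (nov k n) = real k / 2 * Mbar2 k n"
proof -
  have k: "0 < k" using assms by simp
  let ?B = "bounded_overpartition_fps (Suc n)"
  let ?L = "\<Sum>j\<le>n. fps_const (real (j + 1)) * multiples_fps (k * (j + 1))"
  let ?T = "\<Sum>j\<le>n. multiples_quotient_fps (k * (j + 1)) :: real fps"
  have "fps_eq_upto n overpartition_fps ?B"
    by (simp add: fps_eq_upto_def bounded_overpartition_fps_nth)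
  moreover have "fps_eq_upto n ?L ?T"
    using lambert_series_eq_upto[OF k] by simp
  ultimately have "fps_eq_upto n (overpartition_fps * ?L) (?B * ?T)"
    by (rule fps_eq_upto_mult)
  then have "(overpartition_fps * ?L) $ n = (?B * ?T) $ n"
    by (simp add: fps_eq_upto_def)
  with nov_fps[OF k, of n] Mbar2_eq[OF k, of n] show ?thesis
    by simp
qed

end
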